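(* Assume $r=1$, $\gamma\neq 0$, $o(s)=n<\infty$, and that the polynomial $\psi$ is a nonzero constant $C$ (equivalently $\phi=(s-1)C$). If $M$ is a simple $L$-module on which $H^n$ acts as the scalar $C^n$, then $\operatorname{ann}M$ contains $u^n$ or $d^n$.
   Context: Let $s,\gamma\in\mathbb C$, $s\neq0$, $\gamma\neq 0$, $\phi\in\mathbb C[x]$, and let $L=L(\phi,1,s,\gamma)$ be the associative $\mathbb C$-algebra generated by $u,d,h$ subject to $hu-uh=\gamma u$, $dh-hd=\gamma d$, $du-sud=\phi(h)$. Fix $\psi\in\mathbb C[x]$ with $s\psi(x)-\psi(x+\gamma)=\phi(x)$ (such $\psi$ exists) and set $H=ud+\psi(h)\in L$; then $Hu=suH$ and $dH=sHd$. For $z\in\mathbb C^\times$, $o(z)$ denotes its multiplicative order. Modules are left modules. *)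

theory Defs
  imports Main "HOL-Computational_Algebra.Polynomial"
begin

text \<open>A module over L(phi,1,s,gamma) is a complex vector space (given by its
scalar multiplication sc) together with linear endomorphisms U, D, Hh
(actions of u, d, h) satisfying the defining relations of L.\<close>

definition op_poly :: "(complex \<Rightarrow> 'v \<Rightarrow> 'v) \<Rightarrow> complex poly \<Rightarrow> ('v \<Rightarrow> 'v) \<Rightarrow> 'v \<Rightarrow> 'v::ab_group_add"
  where "op_poly sc p T = (\<lambda>v. \<Sum>i\<le>degree p. sc (coeff p i) ((T ^^ i) v))"

definition L_module ::
  "(complex \<Rightarrow> 'v \<Rightarrow> 'v::ab_group_add) \<Rightarrow> complex poly \<Rightarrow> complex \<Rightarrow> complex
    \<Rightarrow> ('v \<Rightarrow> 'v) \<Rightarrow> ('v \<Rightarrow> 'v) \<Rightarrow> ('v \<Rightarrow> 'v) \<Rightarrow> bool" where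
  "L_module sc phi s \<gamma> U D Hh \<longleftrightarrow>
     vector_space sc \<and>
     Vector_Spaces.linear sc sc U \<and> Vector_Spaces.linear sc sc D \<and> Vector_Spaces.linear sc sc Hh \<and>
     (\<forall>v. Hh (U v) - U (Hh v) = sc \<gamma> (U v)) \<and>
     (\<forall>v. D (Hh v) - Hh (D v) = sc \<gamma> (D v)) \<and>
     (\<forall>v. D (U v) - sc s (U (D v)) = op_poly sc phi Hh v)"

definition simple_L_module ::
  "(complex \<Rightarrow> 'v \<Rightarrow> 'v::ab_group_add) \<Rightarrow> complex poly \<Rightarrow> complex \<Rightarrow> complex
    \<Rightarrow> ('v \<Rightarrow> 'v) \<Rightarrow> ('v \<Rightarrow> 'v) \<Rightarrow> ('v \<Rightarrow> 'v) \<Rightarrow> bool" where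
  "simple_L_module sc phi s \<gamma> U D Hh \<longleftrightarrow>
     L_module sc phi s \<gamma> U D Hh \<and> (UNIV :: 'v set) \<noteq> {0} \<and>
     (\<forall>W. module.subspace sc W \<and> U ` W \<subseteq> W \<and> D ` W \<subseteq> W \<and> Hh ` W \<subseteq> W
          \<longrightarrow> W = {0} \<or> W = UNIV)"

definition mult_order_is :: "complex \<Rightarrow> nat \<Rightarrow> bool" where
  "mult_order_is z n \<longleftrightarrow> 0 < n \<and> z ^ n = 1 \<and> (\<forall>k. 0 < k \<and> k < n \<longrightarrow> z ^ k \<noteq> 1)"

end

theory Submission
  imports Defs
begin

(* With psi = C constant the defining relation becomes
   du = s ud + (s - 1)C, and H = ud + C satisfies dH = sHd.  The proof has two halves.
   (1) Since s^n = 1, the element u^n commutes with d and normalises h (u^n h = (h - n gamma) u^n),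
       so ker u^n is a submodule; by simplicity u^n acts either as 0 or injectively.
   (2) Assume u^n injective.  Because H^n = C^n and s is a primitive n-th root of unity, every
       vector is a sum of H-eigenvectors with eigenvalues s^k C (k < n); this is a general fact
       about an operator T with T^n = c^n, proved first via explicit "eigen-components".
       For an H-eigenvector w of eigenvalue mu one computes
       u^n d^n w = (prod_{j<n} (mu s^-j - C)) w, and for mu = s^k C the factor j = k
       vanishes; injectivity of u^n gives d^n w = 0, hence d^n = 0.
   The file first collects the linear algebra of (2), then works in a locale describing the
   relations of L in the constant-psi case, and finally derives the theorem. *)

text \<open>Every vector space carries the pair structure on its endomorphisms, giving access to
  the library's facts about linear maps from a space to itself.\<close>
sublocale vector_space \<subseteq> endo: vector_space_pair scale scale ..

text \<open>The (unnormalised) projection of v onto the mu-eigenspace of an operator T with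
  T^n = mu^n: the sum of mu^-j T^j v over j < n.\<close>
definition eigen_component ::
  "('a::field \<Rightarrow> 'b \<Rightarrow> 'b) \<Rightarrow> ('b \<Rightarrow> 'b) \<Rightarrow> 'a \<Rightarrow> nat \<Rightarrow> 'b \<Rightarrow> 'b::ab_group_add" where
  "eigen_component sc T \<mu> n v = (\<Sum>j<n. sc (inverse \<mu> ^ j) ((T ^^ j) v))"

lemma primitive_root_power_sum:
  fixes s :: "'a::field"
  assumes sn: "s ^ n = 1" and prim: "\<And>j. 0 < j \<Longrightarrow> j < n \<Longrightarrow> s ^ j \<noteq> 1" and "j < n"
  shows "(\<Sum>k<n. (inverse s ^ j) ^ k) = (if j = 0 then of_nat n else 0)"
proof (cases "j = 0")
  case False
  have "s \<noteq> 0"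
    using sn \<open>j < n\<close> by (cases n) auto
  then have "inverse s ^ j \<noteq> 1"
    using prim[of j] False \<open>j < n\<close> by (simp add: power_inverse)
  moreover have "(inverse s ^ j) ^ n = (inverse s ^ n) ^ j"
    by (simp flip: power_mult add: mult.commute)
  then have "(inverse s ^ j) ^ n = 1"
    using sn by (simp add: power_inverse)
  ultimately show ?thesis
    using False by (simp add: sum_gp_strict)
qed simp

context vector_space
begin

lemma linear_funpow:
  "Vector_Spaces.linear scale scale f \<Longrightarrow> Vector_Spaces.linear scale scale (f ^^ k)"
  by (induction k) (simp_all add: linear_id Vector_Spaces.linear_compose)

text \<open>If T^n v = mu^n v, the eigen-component of v really is a mu-eigenvector:
  applying mu^-1 T shifts the summands cyclically.\<close>
lemma eigen_component_eigenvector: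
  assumes lin: "Vector_Spaces.linear scale scale T" and "\<mu> \<noteq> 0"
    and Tn: "(T ^^ n) v = (\<mu> ^ n) *s v"
  shows "T (eigen_component scale T \<mu> n v) = \<mu> *s eigen_component scale T \<mu> n v"
proof -
  define f where "f j = inverse \<mu> ^ j *s (T ^^ j) v" for j
  have "inverse \<mu> *s T (eigen_component scale T \<mu> n v) = (\<Sum>j<n. f (Suc j))"
    unfolding eigen_component_def endo.linear_sum[OF lin] endo.linear_scale[OF lin]
      scale_sum_right f_def
    by (simp add: funpow_swap1[symmetric] mult.commute)
  also have "\<dots> = (\<Sum>j<n. f j)"
  proof -
    have "f n = f 0"
      using \<open>\<mu> \<noteq> 0\<close> by (simp add: f_def Tn power_inverse)
    then show ?thesis
      using sum.lessThan_Suc_shift[of f n] sum.lessThan_Suc[of f n] by simp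
  qed
  finally have "\<mu> *s (inverse \<mu> *s T (eigen_component scale T \<mu> n v)) = \<mu> *s eigen_component scale T \<mu> n v"
    by (simp add: f_def eigen_component_def)
  then show ?thesis
    using \<open>\<mu> \<noteq> 0\<close> by simp
qed

lemma sum_eigen_components:
  assumes sn: "s ^ n = 1" and prim: "\<And>j. 0 < j \<Longrightarrow> j < n \<Longrightarrow> s ^ j \<noteq> 1"
  shows "(\<Sum>k<n. eigen_component scale T (s ^ k * c) n v) = of_nat n *s v"
proof -
  have "(\<Sum>k<n. eigen_component scale T (s ^ k * c) n v)
      = (\<Sum>j<n. (\<Sum>k<n. inverse (s ^ k * c) ^ j) *s (T ^^ j) v)"
    unfolding eigen_component_def by (subst sum.swap) (simp add: scale_sum_left)
  also have "\<dots> = (\<Sum>j<n. if j = 0 then of_nat n *s v else 0)"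
  proof (rule sum.cong)
    fix j assume "j \<in> {..<n}"
    have "inverse (s ^ k * c) ^ j = inverse c ^ j * (inverse s ^ j) ^ k" for k
      by (simp add: power_mult_distrib mult.commute power_inverse flip: power_mult)
    then have "(\<Sum>k<n. inverse (s ^ k * c) ^ j) = inverse c ^ j * (\<Sum>k<n. (inverse s ^ j) ^ k)"
      by (simp add: sum_distrib_left)
    also have "\<dots> = inverse c ^ j * (if j = 0 then of_nat n else 0)"
      using primitive_root_power_sum[OF sn prim, of j] \<open>j \<in> {..<n}\<close> by simp
    finally have "(\<Sum>k<n. inverse (s ^ k * c) ^ j) = inverse c ^ j * (if j = 0 then of_nat n else 0)" .
    then show "(\<Sum>k<n. inverse (s ^ k * c) ^ j) *s (T ^^ j) v = (if j = 0 then of_nat n *s v else 0)"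
      by simp
  qed simp
  also have "\<dots> = of_nat n *s v"
    by (cases n) simp_all
  finally show ?thesis .
qed

end

text \<open>The relations of L(phi,1,s,gamma) needed here, in the case psi = C constant, where
  phi = (s - 1)C and du - s ud = (s - 1)C.\<close>
locale constant_psi_module = vector_space sc
  for sc :: "complex \<Rightarrow> 'v::ab_group_add \<Rightarrow> 'v" +
  fixes U D Hh :: "'v \<Rightarrow> 'v" and s \<gamma> C :: complex
  assumes linear_U: "Vector_Spaces.linear sc sc U"
    and linear_D: "Vector_Spaces.linear sc sc D"
    and linear_Hh: "Vector_Spaces.linear sc sc Hh"
    and Hh_U: "\<And>v. Hh (U v) - U (Hh v) = sc \<gamma> (U v)"
    and D_U: "\<And>v. D (U v) = sc s (U (D v)) + sc ((s - 1) * C) v"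
begin

text \<open>The action of the element H = ud + psi(h) = ud + C.\<close>
definition H :: "'v \<Rightarrow> 'v" where
  "H v = U (D v) + sc C v"

lemma linear_H: "Vector_Spaces.linear sc sc H"
proof -
  have "Vector_Spaces.linear sc sc (\<lambda>v. (U \<circ> D) v + sc C v)"
    by (intro endo.linear_compose_add Vector_Spaces.linear_compose[OF linear_D linear_U]
        linear_scale_self)
  then show ?thesis
    by (simp add: H_def[abs_def])
qed

lemma D_Upow:
  "D ((U ^^ Suc k) v) = sc (s ^ Suc k) ((U ^^ Suc k) (D v)) + sc ((s ^ Suc k - 1) * C) ((U ^^ k) v)"
proof (induction k arbitrary: v)
  case 0
  show ?case using D_U by simp
next
  case (Suc k)
  have lin: "Vector_Spaces.linear sc sc (U ^^ Suc k)"
    by (rule linear_funpow[OF linear_U])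
  have shift: "(U ^^ m) (U x) = (U ^^ Suc m) x" for m x
    by (simp only: funpow_Suc_right o_apply)
  have step: "(U ^^ Suc k) (D (U v)) = sc s ((U ^^ Suc (Suc k)) (D v)) + sc ((s - 1) * C) ((U ^^ Suc k) v)"
    unfolding D_U endo.linear_add[OF lin] endo.linear_scale[OF lin] shift ..
  have coeff: "s ^ Suc k * ((s - 1) * C) + (s ^ Suc k - 1) * C = (s ^ Suc (Suc k) - 1) * C"
    by (simp add: algebra_simps)
  have "D ((U ^^ Suc (Suc k)) v)
      = sc (s ^ Suc k) ((U ^^ Suc k) (D (U v))) + sc ((s ^ Suc k - 1) * C) ((U ^^ k) (U v))"
    using Suc.IH[of "U v"] by (simp only: shift)
  also have "\<dots> = sc (s ^ Suc k) (sc s ((U ^^ Suc (Suc k)) (D v)) + sc ((s - 1) * C) ((U ^^ Suc k) v))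
      + sc ((s ^ Suc k - 1) * C) ((U ^^ Suc k) v)"
    by (simp only: step shift)
  also have "\<dots> = sc (s ^ Suc (Suc k)) ((U ^^ Suc (Suc k)) (D v))
      + sc ((s ^ Suc (Suc k) - 1) * C) ((U ^^ Suc k) v)"
    using coeff by (simp add: scale_right_distrib add.assoc mult.commute flip: scale_left_distrib)
  finally show ?case .
qed

lemma D_Upow_root:
  assumes "s ^ n = 1"
  shows "D ((U ^^ n) v) = (U ^^ n) (D v)"
proof (cases n)
  case (Suc m)
  show ?thesis using D_Upow[of m v] assms unfolding Suc by simp
qed simp

lemma Upow_Hh: "(U ^^ k) (Hh v) = Hh ((U ^^ k) v) - sc (of_nat k * \<gamma>) ((U ^^ k) v)"
proof (induction k)
  case (Suc k)
  define w where "w = (U ^^ k) v"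
  have U_Hh: "U (Hh x) = Hh (U x) - sc \<gamma> (U x)" for x
    using Hh_U[of x] by (simp add: algebra_simps)
  have "(U ^^ Suc k) (Hh v) = U (Hh w - sc (of_nat k * \<gamma>) w)"
    using Suc.IH by (simp add: w_def)
  also have "\<dots> = Hh (U w) - (sc \<gamma> (U w) + sc (of_nat k * \<gamma>) (U w))"
    by (simp add: endo.linear_diff[OF linear_U] endo.linear_scale[OF linear_U] U_Hh)
  also have "\<dots> = Hh (U w) - sc (of_nat (Suc k) * \<gamma>) (U w)"
  proof -
    have "\<gamma> + of_nat k * \<gamma> = of_nat (Suc k) * \<gamma>" by (simp add: algebra_simps)
    then show ?thesis by (simp add: scale_left_distrib[symmetric])
  qed
  finally show ?case by (simp add: w_def)
qed simp

lemma Upow_kernel_submodule: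
  assumes "s ^ n = 1"
  defines "K \<equiv> {v. (U ^^ n) v = 0}"
  shows "subspace K" and "U ` K \<subseteq> K" and "D ` K \<subseteq> K" and "Hh ` K \<subseteq> K"
proof -
  show "subspace K"
    unfolding K_def by (rule endo.linear_subspace_kernel[OF linear_funpow[OF linear_U]])
  show "U ` K \<subseteq> K"
    using endo.linear_0[OF linear_U] by (auto simp: K_def simp flip: funpow_swap1)
  show "D ` K \<subseteq> K"
    using endo.linear_0[OF linear_D] by (auto simp: K_def simp flip: D_Upow_root[OF \<open>s ^ n = 1\<close>])
  show "Hh ` K \<subseteq> K"
    using endo.linear_0[OF linear_Hh] Upow_Hh[of n] by (auto simp: K_def)
qed

lemma D_H: "D (H v) = sc s (H (D v))"
proof -
  have "D (H v) = sc s (U (D (D v))) + (sc ((s - 1) * C) (D v) + sc C (D v))"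
    unfolding H_def by (simp add: endo.linear_add[OF linear_D] endo.linear_scale[OF linear_D]
        D_U add.assoc)
  also have "sc ((s - 1) * C) (D v) + sc C (D v) = sc (s * C) (D v)"
  proof -
    have "(s - 1) * C + C = s * C" by (simp add: algebra_simps)
    then show ?thesis by (simp add: scale_left_distrib[symmetric])
  qed
  finally show ?thesis
    by (simp add: H_def scale_right_distrib)
qed

lemma H_Dpow_eigenvector:
  assumes "s \<noteq> 0" and "H w = sc \<mu> w"
  shows "H ((D ^^ m) w) = sc (\<mu> * inverse s ^ m) ((D ^^ m) w)"
proof (induction m)
  case (Suc m)
  define x where "x = (D ^^ m) w"
  have "sc s (H (D x)) = D (H x)"
    by (rule D_H[symmetric])
  also have "\<dots> = sc (\<mu> * inverse s ^ m) (D x)"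
    using Suc.IH by (simp add: x_def endo.linear_scale[OF linear_D])
  also have "\<dots> = sc s (sc (\<mu> * inverse s ^ Suc m) (D x))"
    using \<open>s \<noteq> 0\<close> by simp
  finally have "H (D x) = sc (\<mu> * inverse s ^ Suc m) (D x)"
    by (rule scale_left_imp_eq[OF \<open>s \<noteq> 0\<close>])
  then show ?case by (simp add: x_def)
qed (simp add: assms)

lemma Upow_Dpow_eigenvector:
  assumes "s \<noteq> 0" and "H w = sc \<mu> w"
  shows "(U ^^ m) ((D ^^ m) w) = sc (\<Prod>j<m. \<mu> * inverse s ^ j - C) w"
proof (induction m)
  case (Suc m)
  define x where "x = (D ^^ m) w"
  have "U (D x) = sc (\<mu> * inverse s ^ m - C) x"
    using H_Dpow_eigenvector[OF assms, of m] unfolding H_def x_def[symmetric]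
    by (simp add: scale_left_diff_distrib eq_diff_eq)
  then have "(U ^^ Suc m) ((D ^^ Suc m) w) = (U ^^ m) (sc (\<mu> * inverse s ^ m - C) x)"
    by (simp add: x_def funpow_swap1)
  also have "\<dots> = sc (\<mu> * inverse s ^ m - C) ((U ^^ m) x)"
    by (rule endo.linear_scale[OF linear_funpow[OF linear_U]])
  finally show ?case
    using Suc.IH by (simp add: x_def mult.commute)
qed simp

text \<open>If u^n is injective, d^n kills every H-eigenvector of eigenvalue s^k C with k < n,
  because the factor j = k of the product above vanishes.\<close>
lemma Dpow_kills_eigenvector:
  assumes inj: "\<And>v. (U ^^ n) v = 0 \<Longrightarrow> v = 0"
    and "s \<noteq> 0" and "k < n" and eig: "H w = sc (s ^ k * C) w"
  shows "(D ^^ n) w = 0"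
proof -
  have "(\<Prod>j<n. s ^ k * C * inverse s ^ j - C) = 0"
    using \<open>k < n\<close> \<open>s \<noteq> 0\<close> by (intro prod_zero) (auto intro!: bexI[of _ k] simp: power_inverse)
  then show ?thesis
    using Upow_Dpow_eigenvector[OF \<open>s \<noteq> 0\<close> eig, of n] inj by simp
qed

text \<open>Second half of the proof: if H^n = C^n and u^n is injective, then d^n = 0, since
  every vector is a sum of H-eigenvectors with eigenvalues s^k C, k < n.\<close>
lemma Dpow_zero_if_Upow_injective:
  assumes ord: "mult_order_is s n" and "C \<noteq> 0"
    and Hn: "\<And>v. (H ^^ n) v = sc (C ^ n) v"
    and inj: "\<And>v. (U ^^ n) v = 0 \<Longrightarrow> v = 0"
  shows "(D ^^ n) v = 0"
proof -
  have "0 < n" and sn: "s ^ n = 1" and prim: "\<And>j. 0 < j \<Longrightarrow> j < n \<Longrightarrow> s ^ j \<noteq> 1"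
    using ord unfolding mult_order_is_def by auto
  have "s \<noteq> 0"
    using sn \<open>0 < n\<close> by (cases n) auto
  have eig: "H (eigen_component sc H (s ^ k * C) n v) = sc (s ^ k * C) (eigen_component sc H (s ^ k * C) n v)"
    for k
  proof (rule eigen_component_eigenvector[OF linear_H])
    show "s ^ k * C \<noteq> 0" using \<open>s \<noteq> 0\<close> \<open>C \<noteq> 0\<close> by simp
    have "(s ^ k) ^ n = (s ^ n) ^ k" by (simp flip: power_mult add: mult.commute)
    with sn have "(s ^ k) ^ n = 1" by simp
    then show "(H ^^ n) v = sc ((s ^ k * C) ^ n) v" by (simp add: Hn power_mult_distrib)
  qed
  have lin: "Vector_Spaces.linear sc sc (D ^^ n)"
    by (rule linear_funpow[OF linear_D])
  have "sc (of_nat n) ((D ^^ n) v) = (D ^^ n) (sc (of_nat n) v)"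
    by (rule endo.linear_scale[OF lin, symmetric])
  also have "\<dots> = (D ^^ n) (\<Sum>k<n. eigen_component sc H (s ^ k * C) n v)"
    by (simp only: sum_eigen_components[OF sn prim])
  also have "\<dots> = (\<Sum>k<n. (D ^^ n) (eigen_component sc H (s ^ k * C) n v))"
    by (rule endo.linear_sum[OF lin])
  also have "\<dots> = 0"
    using Dpow_kills_eigenvector[OF inj \<open>s \<noteq> 0\<close> _ eig] by simp
  finally show ?thesis
    using \<open>0 < n\<close> by simp
qed

text \<open>First half of the proof combined with the second: by simplicity the submodule
  ker u^n is 0 or everything, and in the former case d^n = 0.\<close>
lemma Upow_or_Dpow_vanishes:
  assumes ord: "mult_order_is s n" and "C \<noteq> 0" and Hn: "H ^^ n = (\<lambda>v. sc (C ^ n) v)"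
    and simple: "\<And>W. subspace W \<Longrightarrow> U ` W \<subseteq> W \<Longrightarrow> D ` W \<subseteq> W \<Longrightarrow> Hh ` W \<subseteq> W
      \<Longrightarrow> W = {0} \<or> W = UNIV"
  shows "U ^^ n = (\<lambda>v. 0) \<or> D ^^ n = (\<lambda>v. 0)"
proof -
  have "s ^ n = 1"
    using ord by (simp add: mult_order_is_def)
  from simple[OF Upow_kernel_submodule[OF this]]
  show ?thesis
  proof
    assume "{v. (U ^^ n) v = 0} = {0}"
    then have "(D ^^ n) v = 0" for v
      using Dpow_zero_if_Upow_injective[OF ord \<open>C \<noteq> 0\<close>] Hn by auto
    then show ?thesis by auto
  next
    assume "{v. (U ^^ n) v = 0} = UNIV"
    then show ?thesis by auto
  qed
qed

end

lemma op_poly_const: "op_poly sc [:c:] T v = sc c v"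
  by (simp add: op_poly_def)

text \<open>An L-module with psi = C constant satisfies the relations of the locale: the
  equation s psi(x) - psi(x + gamma) = phi(x) forces phi = (s - 1)C.\<close>
lemma constant_psi_module_if_L_module:
  assumes L: "L_module sc phi s \<gamma> U D Hh"
    and psi: "\<forall>x. s * poly psi x - poly psi (x + \<gamma>) = poly phi x" and "psi = [:C:]"
  shows "constant_psi_module sc U D Hh s \<gamma> C"
proof -
  have "poly phi = poly [:(s - 1) * C:]"
    using psi unfolding \<open>psi = [:C:]\<close> by (auto simp: algebra_simps)
  then have phi: "phi = [:(s - 1) * C:]"
    by (simp add: poly_eq_poly_eq_iff)
  have "D (U v) - sc s (U (D v)) = sc ((s - 1) * C) v" for v
    using L unfolding L_module_def phi op_poly_const by blast
  then have "D (U v) = sc s (U (D v)) + sc ((s - 1) * C) v" for v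
    by (metis diff_eq_eq add.commute)
  then show ?thesis
    using L unfolding L_module_def constant_psi_module_def constant_psi_module_axioms_def
    by blast
qed

theorem mainTheorem7:
  fixes sc :: "complex \<Rightarrow> 'v \<Rightarrow> 'v::ab_group_add"
    and phi psi :: "complex poly" and s \<gamma> C :: complex and n :: nat
    and U D Hh :: "'v \<Rightarrow> 'v"
  assumes "s \<noteq> 0" and "\<gamma> \<noteq> 0"
    and "\<forall>x. s * poly psi x - poly psi (x + \<gamma>) = poly phi x"
    and "mult_order_is s n"
    and "psi = [:C:]" and "C \<noteq> 0"
    and "simple_L_module sc phi s \<gamma> U D Hh"
    and "((\<lambda>v. U (D v) + op_poly sc psi Hh v) ^^ n) = (\<lambda>v. sc (C ^ n) v)"
  shows "(U ^^ n) = (\<lambda>v. 0) \<or> (D ^^ n) = (\<lambda>v. 0)"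
proof -
  from \<open>simple_L_module sc phi s \<gamma> U D Hh\<close>
  have L: "L_module sc phi s \<gamma> U D Hh"
    and simple: "\<And>W. module.subspace sc W \<Longrightarrow> U ` W \<subseteq> W \<Longrightarrow> D ` W \<subseteq> W \<Longrightarrow> Hh ` W \<subseteq> W
      \<Longrightarrow> W = {0} \<or> W = UNIV"
    unfolding simple_L_module_def by blast+
  interpret constant_psi_module sc U D Hh s \<gamma> C
    using constant_psi_module_if_L_module[OF L assms(3,5)] .
  have "H = (\<lambda>v. U (D v) + op_poly sc psi Hh v)"
    by (simp add: fun_eq_iff H_def op_poly_const \<open>psi = [:C:]\<close>)
  then have "H ^^ n = (\<lambda>v. sc (C ^ n) v)"
    using assms(8) by (simp only:)
  with \<open>mult_order_is s n\<close> \<open>C \<noteq> 0\<close> show ?thesis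
    by (rule Upow_or_Dpow_vanishes) (fact simple)
qed

end
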